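(* Let $M$ be a connected Coxeter diagram over $I$ with no subdiagram of type $\mathsf{A}_3$, and let $\Gamma=(V,\tau,* )$ be a geometry over $I$ satisfying Properties (F), (P) and (D). Let $\Gamma'=(V',\tau,* )$ be obtained from $\Gamma$ by either of the following procedures. Procedure B: Let $i,j$ be adjacent nodes with $m:=m_{i,j}<\infty$ and $X$ a flag of type $J$ with $i,j\notin J$ such that every node of $I\setminus\{i,j\}$ adjacent to $i$ or $j$ lies in $J$. Let $x,y$ be elements of types in $\{i,j\}$ in the residue of $X$, of the same type if $m$ is odd and of different types if $m$ is even, at distance at least $m+1$ (possibly infinite) in the incidence graph of the residue of $X$ restricted to types $i,j$. Add new elements $x_2,\dots,x_{m-1}$ so that $(x_1:=x,x_2,\dots,x_{m-1},x_m:=y)$ is a path whose types alternate between $i$ and $j$. Procedure C: Let $X$ be a flag of corank at least $2$ whose residue is disconnected, let $i\neq j$ be in $I\setminus\tau(X)$, and let $x,y$ be elements of types in $\{i,j\}$ lying in different connected components of the residue of $X$. Add new elements forming a path $\gamma$ from $x$ to $y$ of length (number of edges) at least $4$ whose types alternate between $i$ and $j$. In both procedures the incidences among old elements are unchanged, and each newly added element is incident exactly with its neighbours on the path, with the elements of $X$, and with every element (old or new) whose type is different from its own and not adjacent to it in $M$. Then $\Gamma'$ satisfies Properties (F), (P) and (D).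
   Context: A geometry over $I$ is a triple $(V,\tau,* )$ with $\tau:V\to I$ and $*$ a symmetric relation such that elements of equal type are incident iff equal. A flag is a set of pairwise incident elements; its corank is $|I\setminus\tau(X)|$; the residue of a flag $X$ is the geometry over $I\setminus\tau(X)$ formed by the elements outside $X$ incident with all of $X$. Coxeter diagram $M$ with matrix $(m_{i,j})$; nodes $i\ne j$ are adjacent iff $m_{i,j}\ge3$; a subdiagram of type $\mathsf{A}_3$ is three nodes $i,j,k$ with $m_{i,j}=m_{j,k}=3$, $m_{i,k}=2$. A rank 2 geometry (viewed as bipartite incidence graph) is without $k$-gons if it has no cycle of length $2k$. (F) Elements of distinct types that are not adjacent in $M$ are always incident. (P) For adjacent nodes $i,j$ and any flag $X$ of type $J$ with $i,j\notin J$ such that every node of $I\setminus\{i,j\}$ adjacent to $i$ or $j$ lies in $J$, the restriction of the residue of $X$ to types $i,j$ is without $t$-gons for all $t<m_{i,j}$. (D) If $i\ne j$ and $m_{i,j}\ge4$, the restriction of the geometry to types $i$ and $j$ is without digons. *)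

theory Defs
  imports Main "HOL-Library.Extended_Nat"
begin

definition coxeter_diagram :: "'i set \<Rightarrow> ('i \<Rightarrow> 'i \<Rightarrow> enat) \<Rightarrow> bool" where
  "coxeter_diagram I m \<longleftrightarrow> finite I \<and> (\<forall>i\<in>I. m i i = 1) \<and>
     (\<forall>i\<in>I. \<forall>j\<in>I. m i j = m j i \<and> (i \<noteq> j \<longrightarrow> m i j \<ge> 2))"

definition cadj :: "('i \<Rightarrow> 'i \<Rightarrow> enat) \<Rightarrow> 'i \<Rightarrow> 'i \<Rightarrow> bool" where
  "cadj m i j \<longleftrightarrow> i \<noteq> j \<and> m i j \<ge> 3"

definition diagram_connected :: "'i set \<Rightarrow> ('i \<Rightarrow> 'i \<Rightarrow> enat) \<Rightarrow> bool" where
  "diagram_connected I m \<longleftrightarrow>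
     (\<forall>i\<in>I. \<forall>j\<in>I. (i, j) \<in> {(a, b). a \<in> I \<and> b \<in> I \<and> cadj m a b}\<^sup>*)"

definition no_A3 :: "'i set \<Rightarrow> ('i \<Rightarrow> 'i \<Rightarrow> enat) \<Rightarrow> bool" where
  "no_A3 I m \<longleftrightarrow> \<not> (\<exists>i\<in>I. \<exists>j\<in>I. \<exists>k\<in>I. i \<noteq> j \<and> j \<noteq> k \<and> i \<noteq> k \<and>
       m i j = 3 \<and> m j k = 3 \<and> m i k = 2)"

definition geometry :: "'i set \<Rightarrow> 'v set \<Rightarrow> ('v \<Rightarrow> 'i) \<Rightarrow> ('v \<Rightarrow> 'v \<Rightarrow> bool) \<Rightarrow> bool" where
  "geometry I V \<tau> inc \<longleftrightarrow> (\<forall>v\<in>V. \<tau> v \<in> I) \<and> (\<forall>a\<in>V. \<forall>b\<in>V. inc a b = inc b a) \<and>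
     (\<forall>a\<in>V. \<forall>b\<in>V. \<tau> a = \<tau> b \<longrightarrow> (inc a b \<longleftrightarrow> a = b))"

definition flag :: "'v set \<Rightarrow> ('v \<Rightarrow> 'v \<Rightarrow> bool) \<Rightarrow> 'v set \<Rightarrow> bool" where
  "flag V inc X \<longleftrightarrow> X \<subseteq> V \<and> (\<forall>a\<in>X. \<forall>b\<in>X. inc a b)"

definition corank :: "'i set \<Rightarrow> ('v \<Rightarrow> 'i) \<Rightarrow> 'v set \<Rightarrow> nat" where
  "corank I \<tau> X = card (I - \<tau> ` X)"

definition residue :: "'v set \<Rightarrow> ('v \<Rightarrow> 'v \<Rightarrow> bool) \<Rightarrow> 'v set \<Rightarrow> 'v set" where
  "residue V inc X = {v \<in> V - X. \<forall>x\<in>X. inc v x}"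

definition restrict_types :: "'v set \<Rightarrow> ('v \<Rightarrow> 'i) \<Rightarrow> 'i set \<Rightarrow> 'v set" where
  "restrict_types S \<tau> J = {v \<in> S. \<tau> v \<in> J}"

definition iedge :: "('v \<Rightarrow> 'v \<Rightarrow> bool) \<Rightarrow> 'v \<Rightarrow> 'v \<Rightarrow> bool" where
  "iedge inc a b \<longleftrightarrow> a \<noteq> b \<and> inc a b"

definition walk :: "'v set \<Rightarrow> ('v \<Rightarrow> 'v \<Rightarrow> bool) \<Rightarrow> 'v \<Rightarrow> 'v \<Rightarrow> nat \<Rightarrow> bool" where
  "walk S inc a b n \<longleftrightarrow> (\<exists>p. p 0 = a \<and> p n = b \<and> (\<forall>k\<le>n. p k \<in> S) \<and>
      (\<forall>k<n. iedge inc (p k) (p (Suc k))))"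

definition inc_connected :: "'v set \<Rightarrow> ('v \<Rightarrow> 'v \<Rightarrow> bool) \<Rightarrow> bool" where
  "inc_connected S inc \<longleftrightarrow> (\<forall>a\<in>S. \<forall>b\<in>S. \<exists>n. walk S inc a b n)"

definition has_cycle :: "'v set \<Rightarrow> ('v \<Rightarrow> 'v \<Rightarrow> bool) \<Rightarrow> nat \<Rightarrow> bool" where
  "has_cycle S inc n \<longleftrightarrow> n \<ge> 3 \<and> (\<exists>c. inj_on c {..<n} \<and> c ` {..<n} \<subseteq> S \<and>
      (\<forall>k<n. iedge inc (c k) (c (Suc k mod n))))"

definition without_gons :: "'v set \<Rightarrow> ('v \<Rightarrow> 'v \<Rightarrow> bool) \<Rightarrow> nat \<Rightarrow> bool" where
  "without_gons S inc k \<longleftrightarrow> \<not> has_cycle S inc (2 * k)"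

definition propF :: "'i set \<Rightarrow> ('i \<Rightarrow> 'i \<Rightarrow> enat) \<Rightarrow> 'v set \<Rightarrow> ('v \<Rightarrow> 'i) \<Rightarrow> ('v \<Rightarrow> 'v \<Rightarrow> bool) \<Rightarrow> bool" where
  "propF I m V \<tau> inc \<longleftrightarrow>
     (\<forall>a\<in>V. \<forall>b\<in>V. \<tau> a \<noteq> \<tau> b \<and> \<not> cadj m (\<tau> a) (\<tau> b) \<longrightarrow> inc a b)"

definition good_flag_for :: "'i set \<Rightarrow> ('i \<Rightarrow> 'i \<Rightarrow> enat) \<Rightarrow> 'v set \<Rightarrow> ('v \<Rightarrow> 'i) \<Rightarrow> ('v \<Rightarrow> 'v \<Rightarrow> bool)
     \<Rightarrow> 'i \<Rightarrow> 'i \<Rightarrow> 'v set \<Rightarrow> bool" where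
  "good_flag_for I m V \<tau> inc i j X \<longleftrightarrow> flag V inc X \<and> i \<notin> \<tau> ` X \<and> j \<notin> \<tau> ` X \<and>
     (\<forall>k\<in>I - {i, j}. cadj m i k \<or> cadj m j k \<longrightarrow> k \<in> \<tau> ` X)"

definition propP :: "'i set \<Rightarrow> ('i \<Rightarrow> 'i \<Rightarrow> enat) \<Rightarrow> 'v set \<Rightarrow> ('v \<Rightarrow> 'i) \<Rightarrow> ('v \<Rightarrow> 'v \<Rightarrow> bool) \<Rightarrow> bool" where
  "propP I m V \<tau> inc \<longleftrightarrow>
     (\<forall>i\<in>I. \<forall>j\<in>I. cadj m i j \<longrightarrow> (\<forall>X. good_flag_for I m V \<tau> inc i j X \<longrightarrow>
        (\<forall>t::nat. enat t < m i j \<longrightarrow>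
           without_gons (restrict_types (residue V inc X) \<tau> {i, j}) inc t)))"

definition propD :: "'i set \<Rightarrow> ('i \<Rightarrow> 'i \<Rightarrow> enat) \<Rightarrow> 'v set \<Rightarrow> ('v \<Rightarrow> 'i) \<Rightarrow> ('v \<Rightarrow> 'v \<Rightarrow> bool) \<Rightarrow> bool" where
  "propD I m V \<tau> inc \<longleftrightarrow>
     (\<forall>i\<in>I. \<forall>j\<in>I. i \<noteq> j \<and> m i j \<ge> 4 \<longrightarrow> without_gons (restrict_types V \<tau> {i, j}) inc 2)"

definition path_extension :: "'i set \<Rightarrow> ('i \<Rightarrow> 'i \<Rightarrow> enat) \<Rightarrow> 'v set \<Rightarrow> ('v \<Rightarrow> 'i) \<Rightarrow> ('v \<Rightarrow> 'v \<Rightarrow> bool)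
     \<Rightarrow> 'v set \<Rightarrow> 'i \<Rightarrow> 'i \<Rightarrow> (nat \<Rightarrow> 'v) \<Rightarrow> nat \<Rightarrow> 'v set \<Rightarrow> ('v \<Rightarrow> 'v \<Rightarrow> bool) \<Rightarrow> bool" where
  "path_extension I m V \<tau> inc X i j p n V' inc' \<longleftrightarrow>
     p 0 \<in> V \<and> p n \<in> V \<and>
     inj_on p {1..<n} \<and> (\<forall>k\<in>{1..<n}. p k \<notin> V) \<and>
     V' = V \<union> p ` {1..<n} \<and>
     (\<forall>k\<le>n. \<tau> (p k) \<in> {i, j}) \<and> (\<forall>k<n. \<tau> (p k) \<noteq> \<tau> (p (Suc k))) \<and>
     (\<forall>a\<in>V'. \<forall>b\<in>V'. inc' a b \<longleftrightarrow>
        (if a \<in> V \<and> b \<in> V then inc a b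
         else a = b \<or> (\<exists>k<n. {a, b} = {p k, p (Suc k)}) \<or>
              (a \<notin> V \<and> b \<in> X) \<or> (b \<notin> V \<and> a \<in> X) \<or>
              (\<tau> a \<noteq> \<tau> b \<and> \<not> cadj m (\<tau> a) (\<tau> b))))"

(* Procedure B; the path (x_1,...,x_mm) is p 0, ..., p (mm - 1) *)
definition procedureB :: "'i set \<Rightarrow> ('i \<Rightarrow> 'i \<Rightarrow> enat) \<Rightarrow> 'v set \<Rightarrow> ('v \<Rightarrow> 'i) \<Rightarrow> ('v \<Rightarrow> 'v \<Rightarrow> bool)
     \<Rightarrow> 'v set \<Rightarrow> ('v \<Rightarrow> 'v \<Rightarrow> bool) \<Rightarrow> bool" where
  "procedureB I m V \<tau> inc V' inc' \<longleftrightarrow>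
     (\<exists>i j X x y mm p. i \<in> I \<and> j \<in> I \<and> cadj m i j \<and> m i j = enat mm \<and>
        good_flag_for I m V \<tau> inc i j X \<and>
        x \<in> restrict_types (residue V inc X) \<tau> {i, j} \<and>
        y \<in> restrict_types (residue V inc X) \<tau> {i, j} \<and>
        (odd mm \<longleftrightarrow> \<tau> x = \<tau> y) \<and>
        (\<forall>n\<le>mm. \<not> walk (restrict_types (residue V inc X) \<tau> {i, j}) inc x y n) \<and>
        p 0 = x \<and> p (mm - 1) = y \<and>
        path_extension I m V \<tau> inc X i j p (mm - 1) V' inc')"

definition procedureC :: "'i set \<Rightarrow> ('i \<Rightarrow> 'i \<Rightarrow> enat) \<Rightarrow> 'v set \<Rightarrow> ('v \<Rightarrow> 'i) \<Rightarrow> ('v \<Rightarrow> 'v \<Rightarrow> bool)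
     \<Rightarrow> 'v set \<Rightarrow> ('v \<Rightarrow> 'v \<Rightarrow> bool) \<Rightarrow> bool" where
  "procedureC I m V \<tau> inc V' inc' \<longleftrightarrow>
     (\<exists>X i j x y n p. flag V inc X \<and> corank I \<tau> X \<ge> 2 \<and>
        \<not> inc_connected (residue V inc X) inc \<and>
        i \<in> I - \<tau> ` X \<and> j \<in> I - \<tau> ` X \<and> i \<noteq> j \<and>
        x \<in> residue V inc X \<and> y \<in> residue V inc X \<and> \<tau> x \<in> {i, j} \<and> \<tau> y \<in> {i, j} \<and>
        (\<forall>l. \<not> walk (residue V inc X) inc x y l) \<and>
        n \<ge> 4 \<and> p 0 = x \<and> p n = y \<and>
        path_extension I m V \<tau> inc X i j p n V' inc')"

end

theory Submission
  imports Defs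
begin

text \<open>Write the added path as p 0, ..., p n with p 0 = x and p n = y. Apart from its two path
  neighbours and the elements of X, a new element p l is incident only with elements whose type is
  not adjacent to its own. Hence a cycle of \<Gamma>' in two adjacent types that meets a new element
  enters and leaves it along the path; it therefore contains the whole path and closes up through
  an old walk from y back to x. Inside the residue of a flag X' of \<Gamma>' this walk lies in the
  residue of X (X' must contain the elements of X of types adjacent to i or j), which contradicts
  the distance between x and y. A cycle of old elements in the residue of X' lies in the residue
  of the old flag X' \<inter> V, where (P) for \<Gamma> applies, unless X' contains a new element of type
  adjacent to the cycle; then the cycle has length 4, the path has length 2, m_ij = 3, and the
  absence of A3 together with (D) for \<Gamma> gives a contradiction. Digons are treated in the same way.\<close>

section \<open>Cycles and walks in incidence graphs\<close>

text \<open>A cycle of length L is unrolled into an L-periodic sequence indexed by the integers, so that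
  it can be followed in both directions without arithmetic modulo L.\<close>

definition cyclic_seq :: "'a set \<Rightarrow> ('a \<Rightarrow> 'a \<Rightarrow> bool) \<Rightarrow> nat \<Rightarrow> (int \<Rightarrow> 'a) \<Rightarrow> bool" where
  "cyclic_seq S R L D \<longleftrightarrow> 3 \<le> L \<and> (\<forall>z. D z \<in> S) \<and> (\<forall>z. iedge R (D z) (D (z + 1))) \<and>
     (\<forall>a b. D a = D b \<longleftrightarrow> a mod int L = b mod int L)"

lemma has_cycle_cyclic_seq:
  assumes "has_cycle S R L"
  obtains D where "cyclic_seq S R L D"
proof -
  from assms obtain c where L3: "3 \<le> L" and inj: "inj_on c {..<L}" and img: "c ` {..<L} \<subseteq> S"
    and e: "\<forall>k<L. iedge R (c k) (c (Suc k mod L))" unfolding has_cycle_def by blast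
  define D where "D z = c (nat (z mod int L))" for z
  have L_pos: "int L > 0" using L3 by simp
  have idx: "nat (z mod int L) < L" for z
    using L_pos by (metis Euclidean_Rings.pos_mod_bound nat_less_iff pos_mod_sign)
  have "D z \<in> S" for z using img idx unfolding D_def by blast
  moreover have "iedge R (D z) (D (z + 1))" for z
  proof -
    let ?k = "nat (z mod int L)"
    have "int (Suc ?k mod L) = (z mod int L + 1) mod int L"
      using L_pos by (simp add: of_nat_mod add.commute)
    also have "\<dots> = (z + 1) mod int L" by (simp add: mod_add_left_eq)
    finally have "nat ((z + 1) mod int L) = Suc ?k mod L" by simp
    then show ?thesis using e idx[of z] unfolding D_def by metis
  qed
  moreover have "D a = D b \<longleftrightarrow> a mod int L = b mod int L" for a b
  proof -
    have "D a = D b \<longleftrightarrow> nat (a mod int L) = nat (b mod int L)"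
      unfolding D_def using inj idx by (metis inj_on_eq_iff lessThan_iff)
    also have "\<dots> \<longleftrightarrow> a mod int L = b mod int L" using L_pos
      by (metis eq_nat_nat_iff pos_mod_sign)
    finally show ?thesis .
  qed
  ultimately show thesis using that L3 unfolding cyclic_seq_def by blast
qed

lemma cyclic_seq_has_cycle:
  assumes "cyclic_seq S R L D"
  shows "has_cycle S R L"
proof -
  from assms have L3: "3 \<le> L" and DS: "\<And>z. D z \<in> S" and De: "\<And>z. iedge R (D z) (D (z + 1))"
    and Dmod: "\<And>a b. D a = D b \<longleftrightarrow> a mod int L = b mod int L"
    unfolding cyclic_seq_def by blast+
  define c where "c k = D (int k)" for k
  have "inj_on c {..<L}" unfolding inj_on_def c_def Dmod by simp
  moreover have "iedge R (c k) (c (Suc k mod L))" for k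
  proof -
    have "int (Suc k mod L) mod int L = (int k + 1) mod int L" by (simp add: zmod_int add.commute)
    then show ?thesis using De[of "int k"] Dmod unfolding c_def by metis
  qed
  ultimately show ?thesis unfolding has_cycle_def c_def using L3 DS by blast
qed

lemma cyclic_seq_neq:
  assumes "cyclic_seq S R L D" "0 < y - x" "y - x < int L"
  shows "D x \<noteq> D y"
proof
  assume "D x = D y"
  then have "int L dvd (y - x)" using assms(1) mod_eq_dvd_iff unfolding cyclic_seq_def by metis
  then show False using zdvd_imp_le[of "int L" "y - x"] assms(2,3) by linarith
qed

lemma cyclic_seq_step2_neq: "cyclic_seq S R L D \<Longrightarrow> D (z + 2) \<noteq> D z"
  using cyclic_seq_neq[of S R L D "z + 2" z] unfolding cyclic_seq_def by fastforce

lemma cyclic_seq_mono: "cyclic_seq S R L D \<Longrightarrow> range D \<subseteq> T \<Longrightarrow> cyclic_seq T R L D"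
  unfolding cyclic_seq_def by blast

lemma cyclic_seq_cong:
  assumes "\<And>a b. a \<in> S \<Longrightarrow> b \<in> S \<Longrightarrow> R a b = R' a b"
  shows "cyclic_seq S R L D = cyclic_seq S R' L D"
  unfolding cyclic_seq_def iedge_def using assms by blast

lemma cyclic_seq_reflect:
  assumes D: "cyclic_seq S R L D" and sym: "\<And>a b. a \<in> S \<Longrightarrow> b \<in> S \<Longrightarrow> R a b \<Longrightarrow> R b a"
  shows "cyclic_seq S R L (\<lambda>z. D (- z))"
proof -
  have "iedge R (D (- z)) (D (- (z + 1)))" for z
  proof -
    have "iedge R (D (- z - 1)) (D (- z - 1 + 1))" using D unfolding cyclic_seq_def by blast
    then show ?thesis using D sym unfolding cyclic_seq_def iedge_def by simp
  qed
  moreover have "(- a) mod int L = (- b) mod int L \<longleftrightarrow> a mod int L = b mod int L" for a b :: int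
  proof -
    have "(- a) mod int L = (- b) mod int L \<longleftrightarrow> int L dvd (b - a)"
      by (simp add: mod_eq_dvd_iff)
    also have "\<dots> \<longleftrightarrow> a mod int L = b mod int L"
      by (metis dvd_minus_iff minus_diff_eq mod_eq_dvd_iff)
    finally show ?thesis .
  qed
  ultimately show ?thesis using D unfolding cyclic_seq_def by simp
qed

definition follows_path :: "(int \<Rightarrow> 'a) \<Rightarrow> (nat \<Rightarrow> 'a) \<Rightarrow> nat \<Rightarrow> bool" where
  "follows_path D p n \<longleftrightarrow> (\<forall>z l. 1 \<le> l \<longrightarrow> l < n \<longrightarrow> D z = p l \<longrightarrow>
     {D (z - 1), D (z + 1)} = {p (l - 1), p (Suc l)})"

lemma follows_path_forward:
  assumes ne2: "\<And>z. D (z + 2) \<noteq> D z" and fp: "follows_path D p n"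
    and start: "D r = p l" "D (r + 1) = p (Suc l)" "l < n"
  shows "e \<le> n - l \<Longrightarrow> D (r + int e) = p (l + e)"
proof (induction e rule: less_induct)
  case (less e)
  show ?case
  proof (cases e)
    case 0 then show ?thesis using start by simp
  next
    case (Suc e')
    show ?thesis
    proof (cases e')
      case 0 then show ?thesis using start Suc by simp
    next
      case (Suc e'')
      let ?z = "r + int e''"
      have prev: "D ?z = p (l + e'')" "D (?z + 1) = p (Suc (l + e''))"
        using less.IH[of e''] less.IH[of e'] less.prems \<open>e = Suc e'\<close> Suc by (simp_all add: ac_simps)
      have "{D ?z, D (?z + 2)} = {p (l + e''), p (Suc (Suc (l + e'')))}"
        using fp prev(2) less.prems \<open>e = Suc e'\<close> Suc unfolding follows_path_def
        by (auto simp: add.assoc dest!: spec[of _ "?z + 1"] spec[of _ "Suc (l + e'')"])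
      then have "D (?z + 2) = p (Suc (Suc (l + e'')))"
        using ne2[of ?z] prev(1) by (metis doubleton_eq_iff)
      then show ?thesis using \<open>e = Suc e'\<close> Suc by (simp add: ac_simps)
    qed
  qed
qed

lemma follows_path_reflect:
  assumes "follows_path D p n"
  shows "follows_path (\<lambda>z. D (- z)) p n"
  unfolding follows_path_def
proof (intro allI impI)
  fix z l assume l: "1 \<le> l" "l < n" "D (- z) = p l"
  have "{D (- z - 1), D (- z + 1)} = {p (l - 1), p (Suc l)}"
    using assms l unfolding follows_path_def by blast
  moreover have "- (z - 1) = - z + 1" "- (z + 1) = - z - 1" by simp_all
  ultimately show "{D (- (z - 1)), D (- (z + 1))} = {p (l - 1), p (Suc l)}"
    by (metis insert_commute)
qed

lemma follows_path_reverse: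
  assumes "follows_path D p n"
  shows "follows_path (\<lambda>z. D (- z)) (\<lambda>k. p (n - k)) n"
  unfolding follows_path_def
proof (intro allI impI)
  fix z l assume l: "1 \<le> l" "l < n" "D (- z) = p (n - l)"
  have "1 \<le> n - l" "n - l < n" using l by auto
  then have "{D (- z - 1), D (- z + 1)} = {p (n - l - 1), p (Suc (n - l))}"
    using assms l(3) unfolding follows_path_def by blast
  moreover have "n - (l - 1) = Suc (n - l)" "n - Suc l = n - l - 1" using l by auto
  moreover have "- (z - 1) = - z + 1" "- (z + 1) = - z - 1" by simp_all
  ultimately show "{D (- (z - 1)), D (- (z + 1))} = {p (n - (l - 1)), p (n - Suc l)}"
    by (metis insert_commute)
qed

lemma follows_path_through:
  assumes ne2: "\<And>z. D (z + 2) \<noteq> D z" and fp: "follows_path D p n"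
    and start: "D r = p l" "D (r + 1) = p (Suc l)" "1 \<le> l" "l < n" and k: "k \<le> n"
  shows "D (r - int l + int k) = p k"
proof (cases "l \<le> k")
  case True
  have "D (r + int (k - l)) = p (l + (k - l))"
    by (rule follows_path_forward[OF ne2 fp start(1,2,4)]) (use k in simp)
  then show ?thesis using True by (simp add: of_nat_diff algebra_simps)
next
  case False
  have "{D (r - 1), D (r + 1)} = {p (l - 1), p (Suc l)}"
    using fp start unfolding follows_path_def by blast
  moreover have "D (r - 1) \<noteq> D (r + 1)" using ne2[of "r - 1"] by (simp add: algebra_simps)
  ultimately have previous: "D (- (- r + 1)) = p (n - Suc (n - l))"
    using start by (auto simp: doubleton_eq_iff Suc_diff_Suc)
  have ne2': "D (- (z + 2)) \<noteq> D (- z)" for z using ne2[of "- (z + 2)"] by simp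
  have "D (- (- r + int e)) = p (n - (n - l + e))" if "e \<le> l" for e
    using follows_path_forward[where D = "\<lambda>z. D (- z)" and p = "\<lambda>k. p (n - k)",
        OF ne2' follows_path_reverse[OF fp], of "- r" "n - l"] start previous that
    by (simp add: Suc_diff_Suc)
  from this[of "l - k"] show ?thesis using False k start(4) by (simp add: of_nat_diff algebra_simps)
qed

lemma follows_path_traverse:
  assumes ne2: "\<And>z. D (z + 2) \<noteq> D z" and fp: "follows_path D p n"
    and visit: "D r = p l" "1 \<le> l" "l < n"
  obtains s where "\<And>k. k \<le> n \<Longrightarrow> D (s + int k) = p k"
    | s where "\<And>k. k \<le> n \<Longrightarrow> D (s - int k) = p k"
proof -
  have nbrs: "{D (r - 1), D (r + 1)} = {p (l - 1), p (Suc l)}"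
    using fp visit unfolding follows_path_def by blast
  moreover have "D (r - 1) \<noteq> D (r + 1)" using ne2[of "r - 1"] by (simp add: algebra_simps)
  ultimately consider "D (r + 1) = p (Suc l)" | "D (r - 1) = p (Suc l)"
    by (auto simp: doubleton_eq_iff)
  then show thesis
  proof cases
    case 1
    then show thesis using that(1) follows_path_through[OF ne2 fp visit(1) 1 visit(2,3)] by blast
  next
    case 2
    have ne2': "D (- (z + 2)) \<noteq> D (- z)" for z using ne2[of "- (z + 2)"] by simp
    have "D (- (- r)) = p l" "D (- (- r + 1)) = p (Suc l)" using visit(1) 2 by simp_all
    then have "D (- (- r - int l + int k)) = p k" if "k \<le> n" for k
      using follows_path_through[where D = "\<lambda>z. D (- z)", OF ne2' follows_path_reflect[OF fp]]
        visit(2,3) that by blast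
    then show thesis using that(2)[of "r + int l"] by (simp add: algebra_simps)
  qed
qed

lemma cyclic_seq_return_walk:
  assumes E: "cyclic_seq S R L E" and on_path: "\<And>k. k \<le> n \<Longrightarrow> E (s + int k) = p k"
    and start_outside: "p 0 \<notin> p ` {1..<n}" and ends: "p 0 \<noteq> p n"
  shows "n < L" and "walk (S - p ` {1..<n}) R (p n) (p 0) (L - n)"
proof -
  have L3: "3 \<le> L" and ES: "\<And>z. E z \<in> S" and Ee: "\<And>z. iedge R (E z) (E (z + 1))"
    and Emod: "\<And>a b. E a = E b \<longleftrightarrow> a mod int L = b mod int L"
    using E unfolding cyclic_seq_def by blast+
  have period: "E (s + int L) = E s" using Emod by simp
  show nL: "n < L"
  proof (rule ccontr)
    assume "\<not> n < L"
    then have "p L = p 0" using on_path[of L] on_path[of 0] period by simp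
    moreover have "L \<in> {1..<n}" using \<open>\<not> n < L\<close> L3 ends calculation by (cases "L = n") auto
    ultimately show False using start_outside by (metis image_eqI)
  qed
  define q where "q k = E (s + int n + int k)" for k
  have "q k \<notin> p ` {1..<n}" if "k \<le> L - n" for k
  proof
    assume "q k \<in> p ` {1..<n}"
    then obtain l where l: "1 \<le> l" "l < n" "q k = E (s + int l)" using on_path by force
    have "E (s + int l) \<noteq> E (s + int n + int k)"
      by (rule cyclic_seq_neq[OF E]) (use l that nL in auto)
    then show False using l unfolding q_def by simp
  qed
  moreover have "q 0 = p n" "q (L - n) = p 0"
    using on_path[of n] on_path[of 0] period nL unfolding q_def by (simp_all add: of_nat_diff)
  moreover have "iedge R (q k) (q (Suc k))" for k using Ee[of "s + int n + int k"]
    unfolding q_def by (simp add: ac_simps)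
  ultimately show "walk (S - p ` {1..<n}) R (p n) (p 0) (L - n)"
    unfolding walk_def using ES unfolding q_def by (intro exI[of _ q]) (auto simp: q_def)
qed

lemma walk_mono: "walk S R a b l \<Longrightarrow> S \<subseteq> T \<Longrightarrow> walk T R a b l"
  unfolding walk_def by blast

lemma walk_cong:
  assumes "\<And>x y. x \<in> S \<Longrightarrow> y \<in> S \<Longrightarrow> R x y = R' x y"
  shows "walk S R a b l = walk S R' a b l"
proof -
  have "\<forall>k<l. iedge R (q k) (q (Suc k)) \<longleftrightarrow> iedge R' (q k) (q (Suc k))" if "\<forall>k\<le>l. q k \<in> S" for q
    using that assms unfolding iedge_def by (auto simp: Suc_leI)
  then show ?thesis unfolding walk_def by blast
qed

lemma walk_rev:
  assumes "walk S R a b l" and sym: "\<And>x y. x \<in> S \<Longrightarrow> y \<in> S \<Longrightarrow> R x y \<Longrightarrow> R y x"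
  shows "walk S R b a l"
proof -
  from assms obtain q where q: "q 0 = a" "q l = b" "\<forall>k\<le>l. q k \<in> S" "\<forall>k<l. iedge R (q k) (q (Suc k))"
    unfolding walk_def by blast
  have "iedge R (q (l - k)) (q (l - Suc k))" if "k < l" for k
  proof -
    have "Suc (l - Suc k) = l - k" using that by auto
    then have "iedge R (q (l - Suc k)) (q (l - k))" using q(4)[rule_format, of "l - Suc k"] that by simp
    then show ?thesis using q(3) sym unfolding iedge_def by auto
  qed
  then show ?thesis unfolding walk_def using q by (intro exI[of _ "\<lambda>k. q (l - k)"]) auto
qed

lemma walk_refl: "x \<in> S \<Longrightarrow> walk S R x x 0"
  unfolding walk_def by auto

lemma has_cycle_mono: "has_cycle S R l \<Longrightarrow> S \<subseteq> T \<Longrightarrow> has_cycle T R l"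
  unfolding has_cycle_def by blast

lemma has_cycle_4I:
  assumes "{a, b, c, d} \<subseteq> S" "distinct [a, b, c, d]" "R a b" "R b c" "R c d" "R d a"
  shows "has_cycle S R 4"
proof -
  define f where "f k = [a, b, c, d] ! k" for k
  have u: "{..<4::nat} = {0, 1, 2, 3}" by auto
  have "inj_on f {..<4}" unfolding u f_def inj_on_def using assms(2) by auto
  moreover have "f ` {..<4} \<subseteq> S" unfolding u f_def using assms(1) by auto
  moreover have "iedge R (f k) (f (Suc k mod 4))" if "k < 4" for k
  proof -
    have "k \<in> {0, 1, 2, 3}" using that by auto
    then show ?thesis using assms(2-) unfolding f_def iedge_def by auto
  qed
  ultimately show ?thesis unfolding has_cycle_def by auto
qed

section \<open>Coxeter diagrams\<close>

lemma coxeter_diagram_sym: "coxeter_diagram I m \<Longrightarrow> a \<in> I \<Longrightarrow> b \<in> I \<Longrightarrow> m a b = m b a"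
  unfolding coxeter_diagram_def by metis

lemma cadj_sym: "coxeter_diagram I m \<Longrightarrow> a \<in> I \<Longrightarrow> b \<in> I \<Longrightarrow> cadj m a b = cadj m b a"
  unfolding cadj_def using coxeter_diagram_sym by metis

lemma not_cadj_eq_2:
  assumes "coxeter_diagram I m" "a \<in> I" "b \<in> I" "a \<noteq> b" "\<not> cadj m a b"
  shows "m a b = 2"
proof -
  have "2 \<le> m a b" "\<not> 3 \<le> m a b" using assms unfolding coxeter_diagram_def cadj_def by auto
  then show ?thesis by (cases "m a b") (auto simp: numeral_eq_enat)
qed

lemma ge_4_cadj: "a \<noteq> b \<Longrightarrow> 4 \<le> m a b \<Longrightarrow> cadj m a b"
  unfolding cadj_def by (cases "m a b") (auto simp: numeral_eq_enat)

lemma no_A3_ge_4: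
  assumes cox: "coxeter_diagram I m" and "no_A3 I m" "a \<in> I" "b \<in> I" "c \<in> I"
    and "m a b = 3" "m a c = 2" "cadj m b c"
  shows "4 \<le> m b c"
proof -
  have "a \<noteq> b" "a \<noteq> c" using assms(6,7) cox \<open>a \<in> I\<close> unfolding coxeter_diagram_def by auto
  moreover have "b \<noteq> c" using assms(8) unfolding cadj_def by simp
  ultimately have "m b c \<noteq> 3"
    using assms(2-7) coxeter_diagram_sym[OF cox, of a b] unfolding no_A3_def by metis
  then show ?thesis using assms(8) unfolding cadj_def by (cases "m b c") (auto simp: numeral_eq_enat)
qed

lemma good_flag_for_typeD:
  "good_flag_for I m V \<tau> inc i j X \<Longrightarrow> k \<in> I - {i, j} \<Longrightarrow> cadj m i k \<or> cadj m j k \<Longrightarrow> k \<in> \<tau> ` X"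
  unfolding good_flag_for_def by blast

section \<open>Extending a geometry by a path\<close>

locale coxeter_geometry =
  fixes I :: "'i set" and m :: "'i \<Rightarrow> 'i \<Rightarrow> enat" and V :: "'v set" and \<tau> :: "'v \<Rightarrow> 'i"
    and inc :: "'v \<Rightarrow> 'v \<Rightarrow> bool"
  assumes cox: "coxeter_diagram I m" and no_A3: "no_A3 I m" and geo: "geometry I V \<tau> inc"
    and F: "propF I m V \<tau> inc" and P: "propP I m V \<tau> inc" and D: "propD I m V \<tau> inc"
begin

lemma type_in_I: "v \<in> V \<Longrightarrow> \<tau> v \<in> I"
  using geo unfolding geometry_def by auto

lemma inc_sym: "a \<in> V \<Longrightarrow> b \<in> V \<Longrightarrow> inc a b = inc b a"
  using geo unfolding geometry_def by auto

lemma inc_same_type: "a \<in> V \<Longrightarrow> b \<in> V \<Longrightarrow> \<tau> a = \<tau> b \<Longrightarrow> inc a b \<longleftrightarrow> a = b"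
  using geo unfolding geometry_def by auto

end

text \<open>Both procedures are instances of the following setting: Procedure B with n = m_ij - 1,
  Procedure C with n \<ge> 4.\<close>

locale path_ext = coxeter_geometry +
  fixes X :: "'v set" and i j :: 'i and p :: "nat \<Rightarrow> 'v" and n :: nat
    and V' :: "'v set" and inc' :: "'v \<Rightarrow> 'v \<Rightarrow> bool"
  assumes ext: "path_extension I m V \<tau> inc X i j p n V' inc'"
    and X_flag: "flag V inc X" and i_notin_X: "i \<notin> \<tau> ` X" and j_notin_X: "j \<notin> \<tau> ` X"
    and i_in_I: "i \<in> I" and j_in_I: "j \<in> I"
    and n_ge_2: "2 \<le> n" and ends_distinct: "p 0 \<noteq> p n" and m_eq_3: "n = 2 \<Longrightarrow> m i j = 3"
    and start_res: "p 0 \<in> restrict_types (residue V inc X) \<tau> {i, j}"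
    and end_res: "p n \<in> restrict_types (residue V inc X) \<tau> {i, j}"
    and no_short_walk: "\<And>t l. enat t < m i j \<Longrightarrow> l + n = 2 * t \<Longrightarrow>
        \<not> walk (restrict_types (residue V inc X) \<tau> {i, j}) inc (p 0) (p n) l"
begin

lemma start_old: "p 0 \<in> V" and end_old: "p n \<in> V" and p_inj: "inj_on p {1..<n}"
  and p_new: "\<And>k. 1 \<le> k \<Longrightarrow> k < n \<Longrightarrow> p k \<notin> V"
  and V'_eq: "V' = V \<union> p ` {1..<n}"
  and p_type: "\<And>k. k \<le> n \<Longrightarrow> \<tau> (p k) \<in> {i, j}"
  and p_alt: "\<And>k. k < n \<Longrightarrow> \<tau> (p k) \<noteq> \<tau> (p (Suc k))"
  and inc'_iff: "\<And>a b. a \<in> V' \<Longrightarrow> b \<in> V' \<Longrightarrow> inc' a b \<longleftrightarrow>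
        (if a \<in> V \<and> b \<in> V then inc a b
         else a = b \<or> (\<exists>k<n. {a, b} = {p k, p (Suc k)}) \<or>
              (a \<notin> V \<and> b \<in> X) \<or> (b \<notin> V \<and> a \<in> X) \<or>
              (\<tau> a \<noteq> \<tau> b \<and> \<not> cadj m (\<tau> a) (\<tau> b)))"
  using ext unfolding path_extension_def by auto

lemma X_sub_V: "X \<subseteq> V"
  using X_flag unfolding flag_def by auto

lemma X_type: "w \<in> X \<Longrightarrow> \<tau> w \<notin> {i, j}"
  using i_notin_X j_notin_X by force

lemma X_type_unique: "w \<in> X \<Longrightarrow> w' \<in> X \<Longrightarrow> \<tau> w = \<tau> w' \<Longrightarrow> w = w'"
  using X_flag inc_same_type X_sub_V unfolding flag_def by blast

lemma p_in_V': "k \<le> n \<Longrightarrow> p k \<in> V'"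
  using V'_eq start_old end_old by (cases "k = 0 \<or> k = n") auto

lemma V'_cases: "v \<in> V' \<Longrightarrow> v \<in> V \<or> (\<exists>l. 1 \<le> l \<and> l < n \<and> v = p l)"
  using V'_eq by auto

lemma V'_type_in_I: "v \<in> V' \<Longrightarrow> \<tau> v \<in> I"
proof (drule V'_cases, elim disjE exE conjE)
  fix l assume "l < n" "v = p l"
  then show "\<tau> v \<in> I" using p_type[of l] i_in_I j_in_I by auto
qed (rule type_in_I)

lemma inc'_old: "a \<in> V \<Longrightarrow> b \<in> V \<Longrightarrow> inc' a b = inc a b"
  using inc'_iff V'_eq by auto

lemma inc'_sym: "a \<in> V' \<Longrightarrow> b \<in> V' \<Longrightarrow> inc' a b = inc' b a"
  using inc'_iff[of a b] inc'_iff[of b a] inc_sym[of a b] cadj_sym[OF cox] V'_type_in_I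
  by (auto simp: insert_commute)

lemma new_element_inc:
  assumes l: "1 \<le> l" "l < n" and b: "b \<in> V'" "inc' (p l) b" "b \<noteq> p l"
  shows "b \<in> {p (l - 1), p (Suc l)} \<union> X \<or> (\<tau> (p l) \<noteq> \<tau> b \<and> \<not> cadj m (\<tau> (p l)) (\<tau> b))"
proof -
  have pl: "p l \<in> V'" "p l \<notin> V" using p_in_V' p_new l by auto
  have "b \<in> {p (l - 1), p (Suc l)}" if k: "k < n" "{p l, b} = {p k, p (Suc k)}" for k
  proof -
    from k b(3) consider "p l = p k" "b = p (Suc k)" | "p l = p (Suc k)" "b = p k"
      by (metis doubleton_eq_iff)
    then show ?thesis
    proof cases
      case 1
      then have "k \<noteq> 0" using pl(2) start_old by (cases "k = 0") auto
      then have "k = l" using 1 p_inj l k(1) unfolding inj_on_def by fastforce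
      then show ?thesis using 1 by simp
    next
      case 2
      then have "Suc k \<noteq> n" using pl end_old by auto
      then have "Suc k = l" using 2 p_inj l k(1) unfolding inj_on_def by fastforce
      then show ?thesis using 2 by auto
    qed
  qed
  then show ?thesis using inc'_iff[OF pl(1) b(1)] b pl X_sub_V by auto
qed

lemma new_element_inc_adjacent:
  "1 \<le> l \<Longrightarrow> l < n \<Longrightarrow> b \<in> V' \<Longrightarrow> inc' (p l) b \<Longrightarrow> b \<noteq> p l \<Longrightarrow>
    cadj m (\<tau> (p l)) (\<tau> b) \<Longrightarrow> b \<in> {p (l - 1), p (Suc l)} \<union> X"
  using new_element_inc by blast

lemma inc'_same_type:
  assumes ab: "a \<in> V'" "b \<in> V'" "inc' a b" "\<tau> a = \<tau> b"
  shows "a = b"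
proof -
  have new: "a = b" if "1 \<le> l" "l < n" "a = p l" "b \<in> V'" "inc' a b" "\<tau> a = \<tau> b" for a b l
  proof (rule ccontr)
    assume "a \<noteq> b"
    then have "b \<in> {p (l - 1), p (Suc l)} \<union> X" using new_element_inc[of l b] that by auto
    moreover have "\<tau> (p (l - 1)) \<noteq> \<tau> (p l)" "\<tau> (p (Suc l)) \<noteq> \<tau> (p l)"
      using p_alt[of "l - 1"] p_alt[of l] that by auto
    ultimately show False using that p_type[of l] X_type[of b] by auto
  qed
  show ?thesis
  proof (cases "a \<in> V \<and> b \<in> V")
    case True then show ?thesis using ab inc'_old inc_same_type by auto
  next
    case False
    then consider l where "1 \<le> l" "l < n" "b = p l" "a \<in> V"
      | l where "1 \<le> l" "l < n" "a = p l" using ab V'_cases by blast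
    then show ?thesis
    proof cases
      case 1 then show ?thesis using new[of l b a] ab inc'_sym by auto
    next
      case 2 then show ?thesis using new[of l a b] ab by auto
    qed
  qed
qed

lemma propF': "propF I m V' \<tau> inc'"
  using F inc'_iff inc'_old unfolding propF_def by metis

lemma p_type_01: "\<tau> (p 0) \<in> {i, j}" "\<tau> (p 1) \<in> {i, j}" "\<tau> (p 0) \<noteq> \<tau> (p 1)"
  using p_type[of 0] p_type[of 1] p_alt[of 0] n_ge_2 by auto

lemma m_eq_3_types: "n = 2 \<Longrightarrow> u \<in> {i, j} \<Longrightarrow> v \<in> {i, j} \<Longrightarrow> u \<noteq> v \<Longrightarrow> m u v = 3"
  using m_eq_3 coxeter_diagram_sym[OF cox i_in_I j_in_I] by auto

lemma p_type_2: "\<tau> (p 2) = \<tau> (p 0)"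
  using p_type[of 0] p_type[of 1] p_type[of 2] p_alt[of 0] p_alt[of 1] n_ge_2
  by (auto simp: numeral_2_eq_2)

lemma new_element_neighbours:
  assumes l: "1 \<le> l" "l < n" and v: "v \<in> V'" "v' \<in> V'" "v \<noteq> v'" "\<tau> v = \<tau> v'"
    and ne: "v \<noteq> p l" "v' \<noteq> p l" and inc: "inc' (p l) v" "inc' (p l) v'"
    and adj: "cadj m (\<tau> (p l)) (\<tau> v)"
  shows "{v, v'} = {p (l - 1), p (Suc l)}"
proof -
  have near: "v \<in> {p (l - 1), p (Suc l)} \<union> X" "v' \<in> {p (l - 1), p (Suc l)} \<union> X"
    using new_element_inc_adjacent[OF l] v ne inc adj by auto
  have path_type: "\<tau> y \<in> {i, j}" if "y \<in> {p (l - 1), p (Suc l)}" for y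
    using that p_type[of "l - 1"] p_type[of "Suc l"] l by auto
  have "\<tau> v \<in> {i, j}"
  proof (rule ccontr)
    assume "\<tau> v \<notin> {i, j}"
    then have "v \<in> X" "v' \<in> X" using near path_type[of v] path_type[of v'] v(4) by auto
    then show False using X_type_unique v(3,4) by blast
  qed
  then have "v \<notin> X" "v' \<notin> X" using X_type v(4) by auto
  then show ?thesis using near v(3) by auto
qed

lemma cycle_follows_path:
  assumes D: "cyclic_seq S inc' L D" and S: "S \<subseteq> restrict_types V' \<tau> {a, b}"
    and ab: "a \<in> I" "b \<in> I" "cadj m a b"
  shows "follows_path D p n"
  unfolding follows_path_def
proof (intro allI impI)
  fix z l assume l: "1 \<le> l" "l < n" "D z = p l"
  have DV': "D y \<in> V'" and Dt: "\<tau> (D y) \<in> {a, b}" for y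
    using D S unfolding cyclic_seq_def restrict_types_def by blast+
  have "iedge inc' (D (z - 1)) (D (z - 1 + 1))" "iedge inc' (D z) (D (z + 1))"
    using D unfolding cyclic_seq_def by blast+
  then have edges: "inc' (D z) y" "y \<noteq> D z" if "y \<in> {D (z - 1), D (z + 1)}" for y
    using that inc'_sym[OF DV' DV'] unfolding iedge_def by auto
  have type_ne: "\<tau> y \<noteq> \<tau> (D z)" if "y \<in> {D (z - 1), D (z + 1)}" for y
  proof
    assume "\<tau> y = \<tau> (D z)"
    moreover have "y \<in> V'" using that DV' by auto
    ultimately have "D z = y" using inc'_same_type[OF DV'[of z]] edges(1)[OF that] by simp
    then show False using edges(2)[OF that] by simp
  qed
  then have same_type: "\<tau> (D (z - 1)) = \<tau> (D (z + 1))"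
    using Dt[of z] Dt[of "z - 1"] Dt[of "z + 1"] by auto
  have "cadj m (\<tau> (p l)) (\<tau> (D (z - 1)))"
    using type_ne[of "D (z - 1)"] Dt[of z] Dt[of "z - 1"] l(3) ab(3) cadj_sym[OF cox ab(1,2)] by auto
  moreover have "D (z - 1) \<noteq> D (z + 1)" using cyclic_seq_neq[OF D, of "z + 1" "z - 1"] D
    unfolding cyclic_seq_def by auto
  ultimately show "{D (z - 1), D (z + 1)} = {p (l - 1), p (Suc l)}"
    using new_element_neighbours[OF l(1,2) DV' DV' _ same_type] edges l(3) by auto
qed

lemma cycle_old_or_through_path:
  assumes cyc: "has_cycle S inc' L" and S: "S \<subseteq> restrict_types V' \<tau> {a, b}"
    and ab: "a \<in> I" "b \<in> I" "cadj m a b"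
  shows "has_cycle (S \<inter> V) inc L \<or>
    (n < L \<and> p ` {..n} \<subseteq> S \<and> walk (S \<inter> V) inc (p n) (p 0) (L - n))"
proof -
  obtain D where D: "cyclic_seq S inc' L D" using cyc by (rule has_cycle_cyclic_seq)
  have SV': "S \<subseteq> V'" using S unfolding restrict_types_def by blast
  have sym: "inc' y x" if "x \<in> S" "y \<in> S" "inc' x y" for x y using that inc'_sym[of x y] SV' by auto
  have old: "inc' x y = inc x y" if "x \<in> S \<inter> V" "y \<in> S \<inter> V" for x y using that inc'_old by simp
  show ?thesis
  proof (cases "range D \<subseteq> V")
    case True
    moreover have "range D \<subseteq> S" using D unfolding cyclic_seq_def by blast
    ultimately have "cyclic_seq (S \<inter> V) inc' L D" by (intro cyclic_seq_mono[OF D]) blast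
    then have "cyclic_seq (S \<inter> V) inc L D" using cyclic_seq_cong[of "S \<inter> V" inc' inc, OF old] by simp
    then show ?thesis using cyclic_seq_has_cycle by blast
  next
    case False
    then obtain r where "D r \<notin> V" by blast
    moreover have "D r \<in> V'" using D SV' unfolding cyclic_seq_def by blast
    ultimately obtain l where l: "1 \<le> l" "l < n" "D r = p l" using V'_cases by blast
    obtain E s where E: "cyclic_seq S inc' L E" and Ep: "\<And>k. k \<le> n \<Longrightarrow> E (s + int k) = p k"
    proof (rule follows_path_traverse[OF cyclic_seq_step2_neq[OF D] cycle_follows_path[OF D S ab] l(3,1,2)])
      fix s assume "\<And>k. k \<le> n \<Longrightarrow> D (s + int k) = p k"
      then show thesis using that D by blast
    next
      fix s assume "\<And>k. k \<le> n \<Longrightarrow> D (s - int k) = p k"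
      then show thesis using that[OF cyclic_seq_reflect[OF D sym], of "- s"] by simp
    qed
    have "p 0 \<notin> p ` {1..<n}" using start_old p_new by auto
    from cyclic_seq_return_walk[OF E Ep this ends_distinct]
    have "n < L" and "walk (S - p ` {1..<n}) inc' (p n) (p 0) (L - n)" by blast+
    moreover have "S - p ` {1..<n} \<subseteq> S \<inter> V" using SV' V'_eq by auto
    ultimately have "walk (S \<inter> V) inc' (p n) (p 0) (L - n)" by (blast intro: walk_mono)
    then have "walk (S \<inter> V) inc (p n) (p 0) (L - n)" by (simp only: walk_cong[of "S \<inter> V" inc' inc, OF old])
    moreover have "p k \<in> S" if "k \<le> n" for k
      using Ep[OF that, symmetric] E unfolding cyclic_seq_def by simp
    ultimately show ?thesis using \<open>n < L\<close> by auto
  qed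
qed

lemma path_types_eq:
  assumes "p 0 \<in> restrict_types W \<tau> {a, b}" "p 1 \<in> restrict_types W \<tau> {a, b}"
  shows "{a, b} = {i, j}" and "m a b = m i j"
proof -
  have "\<tau> (p 0) \<in> {a, b}" "\<tau> (p 1) \<in> {a, b}" using assms unfolding restrict_types_def by auto
  then show ab: "{a, b} = {i, j}" using p_type_01 by auto
  then show "m a b = m i j" using coxeter_diagram_sym[OF cox i_in_I j_in_I] by (auto simp: doubleton_eq_iff)
qed

lemma propD': "propD I m V' \<tau> inc'"
  unfolding propD_def without_gons_def
proof (intro ballI impI notI)
  fix a b assume ab: "a \<in> I" "b \<in> I" "a \<noteq> b \<and> 4 \<le> m a b"
    and cyc: "has_cycle (restrict_types V' \<tau> {a, b}) inc' (2 * 2)"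
  let ?S = "restrict_types V' \<tau> {a, b}"
  have "cadj m a b" using ge_4_cadj[of a b m] ab(3) by blast
  from cycle_old_or_through_path[OF cyc order_refl ab(1,2) this]
  show False
  proof (elim disjE conjE)
    assume "has_cycle (?S \<inter> V) inc (2 * 2)"
    then have "has_cycle (restrict_types V \<tau> {a, b}) inc (2 * 2)"
      by (rule has_cycle_mono) (auto simp: restrict_types_def)
    then show False using D[unfolded propD_def, rule_format, OF ab] unfolding without_gons_def by simp
  next
    assume short: "n < 2 * 2" and on_S: "p ` {..n} \<subseteq> ?S"
      and return: "walk (?S \<inter> V) inc (p n) (p 0) (2 * 2 - n)"
    have "p 0 \<in> ?S" "p 1 \<in> ?S" using on_S n_ge_2 by auto
    then have mij: "m i j = m a b" using path_types_eq(2) by simp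
    moreover have "m a b \<noteq> 3" using ab by (cases "m a b") (auto simp: numeral_eq_enat)
    ultimately have n3: "n = 3" using m_eq_3 short n_ge_2 by fastforce
    have "iedge inc (p n) (p 0)" using return n3 unfolding walk_def by force
    then have "walk (restrict_types (residue V inc X) \<tau> {i, j}) inc (p 0) (p n) 1"
      using start_res end_res inc_sym[OF start_old end_old] unfolding walk_def iedge_def
      by (intro exI[of _ "\<lambda>k. if k = 0 then p 0 else p n"]) auto
    moreover have "enat 2 < m i j" using mij ab by (cases "m a b") (auto simp: numeral_eq_enat)
    ultimately show False using no_short_walk[of 2 1] n3 by simp
  qed
qed

lemma old_pair_near_new_element:
  assumes l: "1 \<le> l" "l < n" and v: "v \<in> V" "v' \<in> V" "v \<noteq> v'" "\<tau> v = \<tau> v'"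
    and inc: "inc' (p l) v" "inc' (p l) v'" and adj: "cadj m (\<tau> (p l)) (\<tau> v)"
  shows "n = 2 \<and> {v, v'} = {p 0, p 2}"
proof -
  have "v \<noteq> p l" "v' \<noteq> p l" using v p_new l by auto
  then have pair: "{v, v'} = {p (l - 1), p (Suc l)}"
    using new_element_neighbours[OF l _ _ v(3,4) _ _ inc adj] v(1,2) V'_eq by auto
  then have "{p (l - 1), p (Suc l)} \<subseteq> V" using v(1,2) by auto
  then have "l - 1 \<notin> {1..<n}" "Suc l \<notin> {1..<n}" using p_new by auto
  then have "l = 1" "n = 2" using l by auto
  then show ?thesis using pair by (simp add: numeral_2_eq_2)
qed

lemma old_neighbour_in_X:
  assumes "1 \<le> l" "l < n" "z \<in> V" "\<tau> z \<notin> {i, j}" "inc' (p l) z" "cadj m (\<tau> (p l)) (\<tau> z)"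
  shows "z \<in> X"
proof -
  have "z \<in> {p (l - 1), p (Suc l)} \<union> X"
    using new_element_inc_adjacent[OF assms(1,2)] assms(3-6) p_new[OF assms(1,2)] V'_eq by auto
  moreover have "\<tau> (p (l - 1)) \<in> {i, j}" "\<tau> (p (Suc l)) \<in> {i, j}"
    using assms(1,2) p_type[of "l - 1"] p_type[of "Suc l"] by auto
  ultimately show ?thesis using assms(4) by auto
qed

lemma short_path_flag_element:
  assumes n2: "n = 2" and w: "w \<in> X" and z: "z \<in> V" "\<tau> z = \<tau> w" "inc (p 0) z" "inc (p 2) z"
    and adj: "cadj m (\<tau> (p 0)) (\<tau> w)" "\<not> cadj m (\<tau> (p 1)) (\<tau> w)"
  shows "z = w"
proof (rule ccontr)
  assume "z \<noteq> w"
  let ?s = "\<tau> (p 0)" and ?s' = "\<tau> (p 1)" and ?k = "\<tau> w"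
  have wV: "w \<in> V" using w X_sub_V by blast
  have kI: "?k \<in> I" using type_in_I[OF wV] .
  have k_ne: "?k \<notin> {i, j}" using X_type[OF w] .
  have sI: "?s \<in> I" "?s' \<in> I" using p_type_01 i_in_I j_in_I by auto
  have "m ?s' ?s = 3" using m_eq_3_types[OF n2] p_type_01 by auto
  moreover have "m ?s' ?k = 2" using not_cadj_eq_2[OF cox sI(2) kI _ adj(2)] k_ne p_type_01(2) by auto
  ultimately have m4: "4 \<le> m ?s ?k" using no_A3_ge_4[OF cox no_A3 sI(2) sI(1) kI _ _ adj(1)] by blast
  have p2: "p 2 \<in> V" "\<tau> (p 2) = ?s" using end_old n2 p_type_2 by auto
  have s_ne: "?s \<noteq> ?k" using k_ne p_type_01(1) by auto
  have "has_cycle (restrict_types V \<tau> {?s, ?k}) inc 4"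
  proof (rule has_cycle_4I)
    show "{p 0, z, p 2, w} \<subseteq> restrict_types V \<tau> {?s, ?k}"
      using start_old z(1,2) p2 wV unfolding restrict_types_def by auto
    show "distinct [p 0, z, p 2, w]"
      using ends_distinct n2 \<open>z \<noteq> w\<close> z(2) p2(2) s_ne by auto
    have "inc (p 0) w" "inc (p 2) w" using start_res end_res w n2 unfolding restrict_types_def residue_def by auto
    then show "inc (p 0) z" "inc z (p 2)" "inc (p 2) w" "inc w (p 0)"
      using z(3,4) inc_sym[OF z(1) p2(1)] inc_sym[OF wV start_old] by auto
  qed
  then show False
    using D[unfolded propD_def, rule_format, OF sI(1) kI] s_ne m4 unfolding without_gons_def by simp
qed

lemma flag_contains_X_neighbours:
  assumes gf: "good_flag_for I m V' \<tau> inc' a b X'" and ab: "{a, b} = {i, j}"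
    and on_res: "p ` {..n} \<subseteq> residue V' inc' X'"
    and w: "w \<in> X" "cadj m i (\<tau> w) \<or> cadj m j (\<tau> w)"
  shows "w \<in> X'"
proof -
  let ?k = "\<tau> w"
  have k_ne: "?k \<notin> {i, j}" using X_type[OF w(1)] .
  have ab': "a = i \<and> b = j \<or> a = j \<and> b = i" using ab by (simp add: doubleton_eq_iff)
  have "cadj m a ?k \<or> cadj m b ?k" using w(2) ab' by auto
  moreover have "?k \<in> I - {a, b}" using type_in_I[of w] w(1) X_sub_V k_ne ab' by auto
  ultimately have "?k \<in> \<tau> ` X'" using good_flag_for_typeD[OF gf] by blast
  then obtain z where "?k = \<tau> z" and zX': "z \<in> X'" by (rule imageE)
  then have zk: "\<tau> z = ?k" by simp
  have "z \<in> V'" using gf zX' unfolding good_flag_for_def flag_def by blast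
  have zV: "z \<in> V"
  proof (rule ccontr)
    assume "z \<notin> V"
    then obtain l where "l < n" "z = p l" using V'_cases \<open>z \<in> V'\<close> by blast
    then show False using p_type[of l] zk k_ne by auto
  qed
  have inc_z: "inc' (p k) z" if "k \<le> n" for k using on_res that zX' unfolding residue_def by blast
  have "z = w"
  proof (cases "\<exists>l. 1 \<le> l \<and> l < n \<and> cadj m (\<tau> (p l)) ?k")
    case True
    then obtain l where "1 \<le> l" "l < n" "cadj m (\<tau> (p l)) ?k" by blast
    then have "z \<in> X" using old_neighbour_in_X zV zk k_ne inc_z by auto
    then show ?thesis using X_type_unique w(1) zk by blast
  next
    case False
    then have not1: "\<not> cadj m (\<tau> (p 1)) ?k" using n_ge_2 by auto
    then have adj0: "cadj m (\<tau> (p 0)) ?k" using w(2) p_type_01 by auto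
    have n2: "n = 2"
    proof (rule ccontr)
      assume "n \<noteq> 2"
      then have "2 < n" using n_ge_2 by simp
      moreover have "\<not> (1 \<le> (2::nat) \<and> 2 < n \<and> cadj m (\<tau> (p 2)) ?k)" using False by blast
      ultimately show False using adj0 p_type_2 by simp
    qed
    have "inc (p 0) z" "inc (p 2) z" using inc_z[of 0] inc_z[of 2] n2 start_old end_old zV inc'_old by auto
    then show ?thesis using short_path_flag_element[OF n2 w(1) zV zk _ _ adj0 not1] by blast
  qed
  then show ?thesis using zX' by simp
qed

lemma path_residue_old_part:
  assumes gf: "good_flag_for I m V' \<tau> inc' a b X'" and ab: "{a, b} = {i, j}"
    and on_res: "p ` {..n} \<subseteq> residue V' inc' X'"
  shows "restrict_types (residue V' inc' X') \<tau> {a, b} \<inter> V \<subseteq> restrict_types (residue V inc X) \<tau> {i, j}"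
proof
  fix v assume v: "v \<in> restrict_types (residue V' inc' X') \<tau> {a, b} \<inter> V"
  then have vV: "v \<in> V" and v_inc: "\<And>x. x \<in> X' \<Longrightarrow> inc' v x" and "\<tau> v \<in> {a, b}"
    unfolding restrict_types_def residue_def by auto
  then have tv: "\<tau> v \<in> {i, j}" using ab by simp
  have "inc v w" if w: "w \<in> X" for w
  proof (cases "cadj m (\<tau> v) (\<tau> w)")
    case True
    then have "w \<in> X'" using flag_contains_X_neighbours[OF gf ab on_res w] tv by auto
    then show ?thesis using v_inc inc'_old vV w X_sub_V by auto
  next
    case False
    moreover have "\<tau> v \<noteq> \<tau> w" using tv X_type[OF w] by auto
    ultimately show ?thesis using F[unfolded propF_def, rule_format, of v w] vV w X_sub_V by auto
  qed
  moreover have "v \<notin> X" using tv X_type by auto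
  ultimately show "v \<in> restrict_types (residue V inc X) \<tau> {i, j}"
    using vV tv unfolding restrict_types_def residue_def by auto
qed

lemma no_cycle_through_path:
  assumes gf: "good_flag_for I m V' \<tau> inc' a b X'" and t: "enat t < m a b" and short: "n < 2 * t"
    and on_S: "p ` {..n} \<subseteq> restrict_types (residue V' inc' X') \<tau> {a, b}"
    and return: "walk (restrict_types (residue V' inc' X') \<tau> {a, b} \<inter> V) inc (p n) (p 0) (2 * t - n)"
  shows False
proof -
  let ?R = "restrict_types (residue V inc X) \<tau> {i, j}"
  have "p 0 \<in> restrict_types (residue V' inc' X') \<tau> {a, b}" "p 1 \<in> restrict_types (residue V' inc' X') \<tau> {a, b}"
    using on_S n_ge_2 by auto
  note ab = path_types_eq[OF this]
  have "p ` {..n} \<subseteq> residue V' inc' X'" using on_S unfolding restrict_types_def by auto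
  from walk_mono[OF return path_residue_old_part[OF gf ab(1) this]]
  have "walk ?R inc (p 0) (p n) (2 * t - n)"
    by (rule walk_rev) (use inc_sym in \<open>auto simp: restrict_types_def residue_def\<close>)
  moreover have "enat t < m i j" using t ab(2) by simp
  ultimately show False using no_short_walk[of t "2 * t - n"] short by simp
qed

lemma no_old_cycle_with_old_flag:
  assumes ab: "a \<in> I" "b \<in> I" "cadj m a b" and gf: "good_flag_for I m V' \<tau> inc' a b X'" and t: "enat t < m a b"
    and new_not_adjacent: "\<And>l. 1 \<le> l \<Longrightarrow> l < n \<Longrightarrow> p l \<in> X' \<Longrightarrow>
      \<not> (cadj m (\<tau> (p l)) a \<or> cadj m (\<tau> (p l)) b)"
    and cyc: "has_cycle (restrict_types (residue V' inc' X') \<tau> {a, b} \<inter> V) inc (2 * t)"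
  shows False
proof -
  have X'V': "X' \<subseteq> V'" and X'_inc: "\<And>x y. x \<in> X' \<Longrightarrow> y \<in> X' \<Longrightarrow> inc' x y"
    and ab_X': "a \<notin> \<tau> ` X'" "b \<notin> \<tau> ` X'"
    using gf unfolding good_flag_for_def flag_def by auto
  let ?X = "X' \<inter> V"
  have gf_old: "good_flag_for I m V \<tau> inc a b ?X"
    unfolding good_flag_for_def flag_def
  proof (intro conjI ballI impI)
    show "?X \<subseteq> V" by blast
    show "inc x y" if "x \<in> ?X" "y \<in> ?X" for x y using that X'_inc inc'_old by auto
    show "a \<notin> \<tau> ` ?X" "b \<notin> \<tau> ` ?X" using ab_X' by auto
    fix k assume k: "k \<in> I - {a, b}" "cadj m a k \<or> cadj m b k"
    then have "k \<in> \<tau> ` X'" by (rule good_flag_for_typeD[OF gf])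
    then obtain z where zk: "k = \<tau> z" and zX': "z \<in> X'" by (rule imageE)
    have "z \<in> V"
    proof (rule ccontr)
      assume "z \<notin> V"
      then obtain l where l: "1 \<le> l" "l < n" "z = p l" using V'_cases X'V' zX' by blast
      have "cadj m (\<tau> z) a \<or> cadj m (\<tau> z) b"
        using k zk cadj_sym[OF cox] ab V'_type_in_I X'V' zX' by auto
      then show False using new_not_adjacent[OF l(1,2)] l(3) zX' by blast
    qed
    then show "k \<in> \<tau> ` ?X" using zk zX' by blast
  qed
  have "restrict_types (residue V' inc' X') \<tau> {a, b} \<inter> V \<subseteq> restrict_types (residue V inc ?X) \<tau> {a, b}"
    using inc'_old X'V' unfolding restrict_types_def residue_def by auto
  from has_cycle_mono[OF cyc this]
  show False using P[unfolded propP_def, rule_format, OF ab gf_old t] unfolding without_gons_def by simp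
qed

lemma old_cycle_near_new_flag_element:
  assumes C: "cyclic_seq (restrict_types (residue V' inc' X') \<tau> {a, b} \<inter> V) inc L D"
    and q: "1 \<le> l" "l < n" "p l \<in> X'" and u: "u \<in> {a, b}" "cadj m (\<tau> (p l)) u"
  shows "u \<in> {i, j} \<and> n = 2 \<and> L = 4"
proof -
  have DV: "D z \<in> V" and Dt: "\<tau> (D z) \<in> {a, b}" and D_inc: "inc' (p l) (D z)" for z
  proof -
    have Dz: "D z \<in> restrict_types (residue V' inc' X') \<tau> {a, b} \<inter> V"
      using C unfolding cyclic_seq_def by blast
    then show "D z \<in> V" "\<tau> (D z) \<in> {a, b}" unfolding restrict_types_def by auto
    have "inc' (D z) (p l)" "D z \<in> V'" using Dz q(3) unfolding restrict_types_def residue_def by auto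
    then show "inc' (p l) (D z)" using inc'_sym[of "D z" "p l"] p_in_V'[of l] q(2) by auto
  qed
  have alt: "\<tau> (D (z + 1)) \<noteq> \<tau> (D z)" for z
    using C inc_same_type[OF DV DV] unfolding cyclic_seq_def iedge_def by metis
  have step2: "\<tau> (D (z + 2)) = \<tau> (D z)" for z
    using alt[of z] alt[of "z + 1"] Dt[of z] Dt[of "z + 1"] Dt[of "z + 2"] by (auto simp: add.assoc)
  have "L \<noteq> 3"
  proof
    assume "L = 3"
    then have "D 3 = D 0" using C unfolding cyclic_seq_def by simp
    then show False using alt[of 2] step2[of 1] step2[of 0] by simp
  qed
  then have L5: "4 < int L" if "L \<noteq> 4" using that C unfolding cyclic_seq_def by auto
  have pair: "n = 2 \<and> {D z, D (z + 2)} = {p 0, p 2}" if "\<tau> (D z) = u" for z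
    using old_pair_near_new_element[OF q(1,2) DV DV not_sym[OF cyclic_seq_step2_neq[OF C, of z]]
        step2[of z, symmetric] D_inc D_inc] that u(2) by simp
  obtain z where z: "\<tau> (D z) = u" using u(1) alt[of 0] Dt[of 0] Dt[of 1] by (metis add_0 insert_iff singletonD)
  have P1: "{D z, D (z + 2)} = {p 0, p 2}" and n2: "n = 2" using pair[OF z] by auto
  have "{D (z + 2), D (z + 2 + 2)} = {p 0, p 2}" using pair[of "z + 2"] step2[of z] z by auto
  moreover have "D (z + 2 + 2) \<noteq> D (z + 2)" by (rule cyclic_seq_step2_neq[OF C])
  ultimately have "D (z + 4) = D z"
    using P1 cyclic_seq_step2_neq[OF C, of z] by (auto simp: doubleton_eq_iff add.commute)
  then have "L = 4" using cyclic_seq_neq[OF C, of "z + 4" z] L5 by fastforce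
  moreover have "D z = p 0 \<or> D z = p 2" using P1 by (auto simp: doubleton_eq_iff)
  then have "u \<in> {i, j}" using z p_type[of 0] p_type[of 2] n2 by auto
  ultimately show ?thesis using n2 by blast
qed

lemma no_old_cycle_with_new_flag_element:
  assumes ab: "a \<in> I" "b \<in> I" "cadj m a b" and gf: "good_flag_for I m V' \<tau> inc' a b X'"
    and C: "cyclic_seq (restrict_types (residue V' inc' X') \<tau> {a, b} \<inter> V) inc L D"
    and q: "1 \<le> l" "l < n" "p l \<in> X'" and adj: "cadj m (\<tau> (p l)) a \<or> cadj m (\<tau> (p l)) b"
  shows False
proof -
  let ?s = "\<tau> (p l)"
  note adjacent = old_cycle_near_new_flag_element[OF C q]
  have DV: "D z \<in> V" and Dt: "\<tau> (D z) \<in> {a, b}" for z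
    using C unfolding cyclic_seq_def restrict_types_def by auto
  have s_ij: "?s \<in> {i, j}" and sI: "?s \<in> I" using p_type[of l] q(2) i_in_I j_in_I by auto
  have s_ab: "?s \<notin> {a, b}" using gf q(3) unfolding good_flag_for_def by auto
  obtain u where u: "u \<in> {a, b}" "cadj m ?s u" using adj cadj_sym[OF cox sI] ab(1,2) by auto
  define w where "w = (if u = a then b else a)"
  have w: "w \<in> {a, b}" "w \<noteq> u" "cadj m u w" "\<tau> (D z) \<in> {u, w}" for z
    using u(1) ab(3) Dt[of z] cadj_sym[OF cox ab(1,2)] unfolding w_def cadj_def by auto
  have uI: "u \<in> I" "w \<in> I" using u(1) w(1) ab(1,2) by auto
  from adjacent[OF u] have u_ij: "u \<in> {i, j}" and n2: "n = 2" and L4: "L = 4" by auto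
  have su: "?s \<noteq> u" "?s \<noteq> w" using s_ab u(1) w(1) by auto
  have m3: "m ?s u = 3" using m_eq_3_types[OF n2 s_ij u_ij su(1)] .
  have "\<not> cadj m ?s w"
  proof
    assume "cadj m ?s w"
    then have "w \<in> {i, j}" using adjacent[OF w(1)] by blast
    then show False using u_ij s_ij su w(2) by auto
  qed
  then have m2: "m ?s w = 2" using not_cadj_eq_2[OF cox sI uI(2) su(2)] by blast
  have m4: "4 \<le> m u w" using no_A3_ge_4[OF cox no_A3 sI uI m3 m2 w(3)] .
  have "range D \<subseteq> restrict_types V \<tau> {u, w}" using DV w(4) unfolding restrict_types_def by auto
  then have "cyclic_seq (restrict_types V \<tau> {u, w}) inc 4 D" using cyclic_seq_mono[OF C] L4 by simp
  then have "has_cycle (restrict_types V \<tau> {u, w}) inc (2 * 2)"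
    using cyclic_seq_has_cycle by simp
  then show False
    using D[unfolded propD_def, rule_format, OF uI] w(2) m4 unfolding without_gons_def by auto
qed

lemma propP': "propP I m V' \<tau> inc'"
  unfolding propP_def without_gons_def
proof (intro ballI impI allI notI)
  fix a b X' t
  assume ab: "a \<in> I" "b \<in> I" "cadj m a b" and gf: "good_flag_for I m V' \<tau> inc' a b X'"
    and t: "enat t < m a b" and cyc: "has_cycle (restrict_types (residue V' inc' X') \<tau> {a, b}) inc' (2 * t)"
  let ?S = "restrict_types (residue V' inc' X') \<tau> {a, b}"
  have "?S \<subseteq> restrict_types V' \<tau> {a, b}" unfolding restrict_types_def residue_def by auto
  from cycle_old_or_through_path[OF cyc this ab]
  show False
  proof (elim disjE conjE)
    assume old: "has_cycle (?S \<inter> V) inc (2 * t)"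
    show False
    proof (cases "\<exists>l. 1 \<le> l \<and> l < n \<and> p l \<in> X' \<and> (cadj m (\<tau> (p l)) a \<or> cadj m (\<tau> (p l)) b)")
      case True
      then obtain l where "1 \<le> l" "l < n" "p l \<in> X'" "cadj m (\<tau> (p l)) a \<or> cadj m (\<tau> (p l)) b"
        by blast
      moreover obtain D where "cyclic_seq (?S \<inter> V) inc (2 * t) D"
        using old by (rule has_cycle_cyclic_seq)
      ultimately show False using no_old_cycle_with_new_flag_element[OF ab gf] by blast
    next
      case False
      then show False using no_old_cycle_with_old_flag[OF ab gf t _ old] by blast
    qed
  next
    assume "n < 2 * t" "p ` {..n} \<subseteq> ?S" "walk (?S \<inter> V) inc (p n) (p 0) (2 * t - n)"
    then show False by (rule no_cycle_through_path[OF gf t])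
  qed
qed

end

lemma (in coxeter_geometry) procedureB_path_ext:
  assumes "procedureB I m V \<tau> inc V' inc'"
  obtains X i j p n where "path_ext I m V \<tau> inc X i j p n V' inc'"
proof -
  from assms obtain i j X x y mm p where ij: "i \<in> I" "j \<in> I" "cadj m i j" and mm: "m i j = enat mm"
    and gf: "good_flag_for I m V \<tau> inc i j X"
    and xy: "x \<in> restrict_types (residue V inc X) \<tau> {i, j}" "y \<in> restrict_types (residue V inc X) \<tau> {i, j}"
    and far: "\<forall>l\<le>mm. \<not> walk (restrict_types (residue V inc X) \<tau> {i, j}) inc x y l"
    and ends: "p 0 = x" "p (mm - 1) = y"
    and ext: "path_extension I m V \<tau> inc X i j p (mm - 1) V' inc'"
    unfolding procedureB_def by blast
  have mm3: "3 \<le> mm" using ij(3) mm unfolding cadj_def by (simp add: numeral_eq_enat)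
  have "path_ext I m V \<tau> inc X i j p (mm - 1) V' inc'"
  proof unfold_locales
    show "flag V inc X" "i \<notin> \<tau> ` X" "j \<notin> \<tau> ` X" using gf unfolding good_flag_for_def by auto
    show "2 \<le> mm - 1" using mm3 by simp
    show "p 0 \<noteq> p (mm - 1)" using far walk_refl[OF xy(1)] ends by auto
    show "m i j = 3" if "mm - 1 = 2" using that mm by (simp add: numeral_eq_enat)
    show "\<not> walk (restrict_types (residue V inc X) \<tau> {i, j}) inc (p 0) (p (mm - 1)) l"
      if "enat t < m i j" "l + (mm - 1) = 2 * t" for t l
      using far ends that mm mm3 by auto
  qed (use ext ij xy ends in auto)
  then show thesis by (rule that)
qed

lemma (in coxeter_geometry) procedureC_path_ext:
  assumes "procedureC I m V \<tau> inc V' inc'"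
  obtains X i j p n where "path_ext I m V \<tau> inc X i j p n V' inc'"
proof -
  from assms obtain X i j x y n p where X: "flag V inc X" and ij: "i \<in> I - \<tau> ` X" "j \<in> I - \<tau> ` X"
    and xy: "x \<in> residue V inc X" "y \<in> residue V inc X" "\<tau> x \<in> {i, j}" "\<tau> y \<in> {i, j}"
    and disconnected: "\<forall>l. \<not> walk (residue V inc X) inc x y l" and n4: "4 \<le> n"
    and ends: "p 0 = x" "p n = y"
    and ext: "path_extension I m V \<tau> inc X i j p n V' inc'"
    unfolding procedureC_def by blast
  have "path_ext I m V \<tau> inc X i j p n V' inc'"
  proof unfold_locales
    show "p 0 \<noteq> p n" using disconnected walk_refl[OF xy(1), of inc] ends by force
    show "\<not> walk (restrict_types (residue V inc X) \<tau> {i, j}) inc (p 0) (p n) l" for l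
      using disconnected ends walk_mono[of _ inc x y l "residue V inc X"]
      unfolding restrict_types_def by blast
  qed (use X ext ij xy ends n4 in \<open>auto simp: restrict_types_def\<close>)
  then show thesis by (rule that)
qed

theorem mainTheorem3:
  fixes I :: "'i set" and m :: "'i \<Rightarrow> 'i \<Rightarrow> enat"
    and V V' :: "'v set" and \<tau> :: "'v \<Rightarrow> 'i" and inc inc' :: "'v \<Rightarrow> 'v \<Rightarrow> bool"
  assumes "coxeter_diagram I m"
    and "diagram_connected I m"
    and "no_A3 I m"
    and "geometry I V \<tau> inc"
    and "propF I m V \<tau> inc" and "propP I m V \<tau> inc" and "propD I m V \<tau> inc"
    and "procedureB I m V \<tau> inc V' inc' \<or> procedureC I m V \<tau> inc V' inc'"
  shows "propF I m V' \<tau> inc' \<and> propP I m V' \<tau> inc' \<and> propD I m V' \<tau> inc'"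
proof -
  interpret coxeter_geometry I m V \<tau> inc
    using assms by unfold_locales
  obtain X i j p n where "path_ext I m V \<tau> inc X i j p n V' inc'"
    using assms(8) procedureB_path_ext procedureC_path_ext by metis
  then interpret path_ext I m V \<tau> inc X i j p n V' inc' .
  show ?thesis using propF' propP' propD' by blast
qed

end
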